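(* Let $\kappa$ be an algebraically closed field of characteristic zero, complete for a non-trivial non-Archimedean absolute value. Let $a,b\in\kappa$ with $a\ne0$ and $|a|\le1$, and let $L(z)=az+b$. Let $f\in\mathcal{A}(\kappa)$ be an entire function, not identically zero, and let $m$ be a positive integer. Then for every $r>|b|/|a|$, $$\mu(r,f\circ L)\le\mu(r,f),\qquad \mu\!\left(r,\frac{f\circ L}{f}\right)\le1,\qquad \mu\!\left(r,\frac{\Delta_L^mf}{f}\right)\le1.$$
   Context: $\mathcal{A}(\kappa)$ is the ring of entire functions over $\kappa$: power series $\sum_{n\ge0}a_nz^n$ with $a_n\in\kappa$ converging on all of $\kappa$. For such $g$, $\mu(r,g)=\max_n|a_n|r^n$; for a meromorphic $g/h$ ($g,h$ entire, $h\not\equiv0$), $\mu(r,g/h)=\mu(r,g)/\mu(r,h)$. The difference operators are $\Delta_Lf=f\circ L-f$ and $\Delta_L^mf=\Delta_L(\Delta_L^{m-1}f)$ (with $\Delta_L^1=\Delta_L$). *)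

theory Defs
  imports "HOL-Analysis.Analysis" "HOL-Computational_Algebra.Polynomial"
begin

definition nonarch_abs :: "('k::field \<Rightarrow> real) \<Rightarrow> bool" where
  "nonarch_abs av \<longleftrightarrow>
     (\<forall>x. av x \<ge> 0) \<and> (\<forall>x. av x = 0 \<longleftrightarrow> x = 0) \<and>
     (\<forall>x y. av (x * y) = av x * av y) \<and>
     (\<forall>x y. av (x + y) \<le> max (av x) (av y))"

definition nontrivial_abs :: "('k::field \<Rightarrow> real) \<Rightarrow> bool" where
  "nontrivial_abs av \<longleftrightarrow> (\<exists>x. x \<noteq> 0 \<and> av x \<noteq> 1)"

definition conv_abs :: "('k::field \<Rightarrow> real) \<Rightarrow> (nat \<Rightarrow> 'k) \<Rightarrow> 'k \<Rightarrow> bool" where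
  "conv_abs av s l \<longleftrightarrow> (\<lambda>n. av (s n - l)) \<longlonglongrightarrow> 0"

definition complete_abs :: "('k::field \<Rightarrow> real) \<Rightarrow> bool" where
  "complete_abs av \<longleftrightarrow>
     (\<forall>s. (\<forall>e>0. \<exists>N. \<forall>m\<ge>N. \<forall>n\<ge>N. av (s m - s n) < e) \<longrightarrow> (\<exists>l. conv_abs av s l))"

definition alg_closed_field :: "'k::field itself \<Rightarrow> bool" where
  "alg_closed_field _ \<longleftrightarrow> (\<forall>p :: 'k poly. degree p > 0 \<longrightarrow> (\<exists>x. poly p x = 0))"

text \<open>The power series with coefficients c converges at every point of the field,
  with sum F z: c is an entire function whose associated function is F.\<close>
definition entire_repr :: "('k::field \<Rightarrow> real) \<Rightarrow> (nat \<Rightarrow> 'k) \<Rightarrow> ('k \<Rightarrow> 'k) \<Rightarrow> bool" where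
  "entire_repr av c F \<longleftrightarrow> (\<forall>z. conv_abs av (\<lambda>N. \<Sum>n<N. c n * z ^ n) (F z))"

definition mu :: "('k::field \<Rightarrow> real) \<Rightarrow> real \<Rightarrow> (nat \<Rightarrow> 'k) \<Rightarrow> real" where
  "mu av r c = (SUP n. av (c n) * r ^ n)"

definition diffL :: "('k \<Rightarrow> 'k) \<Rightarrow> ('k \<Rightarrow> 'k::ab_group_add) \<Rightarrow> ('k \<Rightarrow> 'k)" where
  "diffL L g = (\<lambda>z. g (L z) - g z)"

end

theory Submission
  imports Defs
begin

text \<open>
  Substituting \<open>z + b\<close> into \<open>\<Sum>\<^sub>n e\<^sub>n z\<^sup>n\<close> gives the coefficients
  \<open>d\<^sub>k = \<Sum>\<^sub>n e\<^sub>n C(n,k) b\<^sup>n\<^sup>-\<^sup>k\<close>. Integers have absolute value at most 1, so for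
  \<open>|b| < \<rho>\<close> every term of this series is at most \<open>|e\<^sub>n| \<rho>\<^sup>n / \<rho>\<^sup>k\<close>, and the
  ultrametric inequality gives \<open>|d\<^sub>k| \<rho>\<^sup>k \<le> \<mu>(\<rho>, e)\<close>. Scaling the variable by \<open>a\<close>
  multiplies \<open>d\<^sub>k\<close> by \<open>a\<^sup>k\<close>, hence \<open>\<mu>(r, f \<circ> L) \<le> \<mu>(|a| r, f) \<le> \<mu>(r, f)\<close> as soon
  as \<open>|b| < |a| r\<close> and \<open>|a| \<le> 1\<close>. By the ultrametric inequality again,
  \<open>\<mu>(r, g - h) \<le> max (\<mu>(r, g)) (\<mu>(r, h))\<close>, so induction on \<open>m\<close> bounds \<open>\<Delta>\<^sub>L\<^sup>m f\<close>.
  The quotient bounds follow because \<open>\<mu>(r, f) > 0\<close> for \<open>f \<noteq> 0\<close> and the coefficients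
  of an entire function are unique (identity theorem).
\<close>

definition shift_term :: "(nat \<Rightarrow> 'a::comm_ring_1) \<Rightarrow> 'a \<Rightarrow> nat \<Rightarrow> nat \<Rightarrow> 'a" where
  "shift_term e b k n = e n * of_nat (n choose k) * b ^ (n - k)"

lemma sum_shift_term_binomial:
  assumes "n < K"
  shows "(\<Sum>k<K. shift_term e b k n * z ^ k) = e n * (z + b) ^ n"
proof -
  have "e n * (z + b) ^ n = (\<Sum>k\<le>n. shift_term e b k n * z ^ k)"
    unfolding shift_term_def binomial_ring by (simp add: sum_distrib_left mult_ac)
  also have "\<dots> = (\<Sum>k<K. shift_term e b k n * z ^ k)"
    using assms by (intro sum.mono_neutral_left) (auto simp: shift_term_def binomial_eq_0)
  finally show ?thesis by simp
qed

lemma LIMSEQ_0_eventually_le: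
  fixes f :: "nat \<Rightarrow> real"
  assumes "f \<longlonglongrightarrow> 0" "0 < \<eta>"
  obtains N where "\<And>n. N \<le> n \<Longrightarrow> f n \<le> \<eta>"
proof -
  obtain N where "\<forall>n\<ge>N. f n < \<eta>"
    using order_tendstoD(2)[OF assms] unfolding eventually_sequentially by blast
  then show ?thesis
    using that less_imp_le by blast
qed

locale nonarch_field =
  fixes av :: "'k::field \<Rightarrow> real"
  assumes nonarch: "nonarch_abs av"
begin

lemma av_nonneg [simp]: "av x \<ge> 0"
  using nonarch unfolding nonarch_abs_def by blast

lemma av_eq_0_iff [simp]: "av x = 0 \<longleftrightarrow> x = 0"
  using nonarch unfolding nonarch_abs_def by blast

lemma av_pos_iff [simp]: "av x > 0 \<longleftrightarrow> x \<noteq> 0"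
  using av_nonneg[of x] av_eq_0_iff[of x] by linarith

lemma av_mult: "av (x * y) = av x * av y"
  using nonarch unfolding nonarch_abs_def by blast

lemma av_add_le: "av (x + y) \<le> max (av x) (av y)"
  using nonarch unfolding nonarch_abs_def by blast

lemma av_0 [simp]: "av 0 = 0"
  by simp

lemma av_one [simp]: "av 1 = 1"
  using av_mult[of 1 1] by simp

lemma av_minus [simp]: "av (- x) = av x"
proof -
  have "(av (- 1) - 1) * (av (- 1) + 1) = 0"
    using av_mult[of "- 1" "- 1"] by (simp add: algebra_simps)
  then have "av (- 1) = 1"
    using av_nonneg[of "- 1"] by simp
  then show ?thesis
    using av_mult[of "- 1" x] by simp
qed

lemma av_diff_commute: "av (x - y) = av (y - x)"
  by (metis av_minus minus_diff_eq)

lemma av_power [simp]: "av (x ^ n) = av x ^ n"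
  by (induct n) (auto simp: av_mult)

lemma av_inverse [simp]: "av (inverse x) = inverse (av x)"
proof (cases "x = 0")
  case False
  then have "av x * av (inverse x) = 1"
    by (simp add: av_mult[symmetric])
  then show ?thesis
    by (rule inverse_unique[symmetric])
qed simp

lemma av_of_nat_le_1: "av (of_nat n) \<le> 1"
proof (induct n)
  case (Suc n)
  then show ?case
    using av_add_le[of 1 "of_nat n"] by simp
qed simp

lemma av_diff_le: "av (x - y) \<le> max (av x) (av y)"
  using av_add_le[of x "- y"] by simp

lemma av_diff_triangle: "av (x - y) \<le> max (av (x - z)) (av (z - y))"
  using av_add_le[of "x - z" "z - y"] by simp

lemma av_add_eq_left:
  assumes "av y < av x"
  shows "av (x + y) = av x"
proof -
  have "av (x + y) \<le> av x"
    using av_add_le[of x y] assms by simp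
  moreover have "av x \<le> max (av (x + y)) (av y)"
    using av_add_le[of "x + y" "- y"] by simp
  ultimately show ?thesis
    using assms by linarith
qed

lemma av_sum_le:
  assumes "B \<ge> 0" and "\<And>i. i \<in> A \<Longrightarrow> av (f i) \<le> B"
  shows "av (sum f A) \<le> B"
  using assms(2)
proof (induct A rule: infinite_finite_induct)
  case (insert x A)
  then show ?case
    using order.trans[OF av_add_le[of "f x" "sum f A"]] by simp
qed (use assms(1) in simp_all)

lemma av_sum_diff_le:
  fixes N M :: nat
  assumes "N \<le> M" and "\<And>n. N \<le> n \<Longrightarrow> av (g n) \<le> B" and "B \<ge> 0"
  shows "av ((\<Sum>n<M. g n) - (\<Sum>n<N. g n)) \<le> B"
proof -
  have "{..<N} \<subseteq> {..<M}"
    using assms(1) by auto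
  then have "(\<Sum>n<M. g n) - (\<Sum>n<N. g n) = sum g ({..<M} - {..<N})"
    by (rule sum_diff[OF finite_lessThan, symmetric])
  also have "av \<dots> \<le> B"
    using assms(2,3) by (intro av_sum_le) auto
  finally show ?thesis .
qed

lemma av_sum_eq_dominant:
  assumes "finite A" "k \<in> A" and "\<And>i. i \<in> A - {k} \<Longrightarrow> av (f i) \<le> B" and "0 \<le> B" "B < av (f k)"
  shows "av (sum f A) = av (f k)"
proof -
  have "av (sum f (A - {k})) < av (f k)"
    using av_sum_le[of B "A - {k}" f] assms(3-5) by simp
  then show ?thesis
    using assms(1,2) by (simp add: sum.remove av_add_eq_left)
qed

lemma conv_abs_unique:
  assumes "conv_abs av s l" "conv_abs av s l'"
  shows "l = l'"
proof -
  have lim: "(\<lambda>n. max (av (s n - l)) (av (s n - l'))) \<longlonglongrightarrow> max 0 0"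
    using assms unfolding conv_abs_def by (intro tendsto_max)
  have "av (l - l') \<le> max (av (s n - l)) (av (s n - l'))" for n
    using av_diff_triangle[of l l' "s n"] av_diff_commute[of l "s n"] by simp
  then have "av (l - l') \<le> 0"
    using LIMSEQ_le_const[OF lim] by simp
  then show ?thesis
    using av_nonneg[of "l - l'"] by simp
qed

lemma conv_abs_limit_le:
  assumes "conv_abs av s l" and "\<And>M. N \<le> M \<Longrightarrow> av (s M - x) \<le> B"
  shows "av (l - x) \<le> B"
proof -
  have "B \<ge> 0"
    using assms(2)[of N] av_nonneg[of "s N - x"] by linarith
  have lim: "(\<lambda>n. max (av (s n - l)) B) \<longlonglongrightarrow> max 0 B"
    using assms(1) unfolding conv_abs_def by (intro tendsto_max) auto
  have "av (l - x) \<le> max (av (s n - l)) B" if "N \<le> n" for n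
    using av_diff_triangle[of l x "s n"] av_diff_commute[of l "s n"] assms(2)[OF that] by simp
  then have "av (l - x) \<le> max 0 B"
    by (intro LIMSEQ_le_const[OF lim]) auto
  with \<open>B \<ge> 0\<close> show ?thesis
    by simp
qed

lemma conv_abs_mult_right:
  assumes "conv_abs av s l"
  shows "conv_abs av (\<lambda>n. s n * c) (l * c)"
proof -
  have "(\<lambda>n. av (s n - l) * av c) \<longlonglongrightarrow> 0 * av c"
    using assms unfolding conv_abs_def by (intro tendsto_mult) auto
  then show ?thesis
    unfolding conv_abs_def by (simp add: av_mult[symmetric] left_diff_distrib)
qed

lemma conv_abs_diff:
  assumes "conv_abs av s l" "conv_abs av t l'"
  shows "conv_abs av (\<lambda>n. s n - t n) (l - l')"
  unfolding conv_abs_def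
proof (rule Lim_null_comparison[OF always_eventually])
  show "(\<lambda>n. max (av (s n - l)) (av (t n - l'))) \<longlonglongrightarrow> 0"
    using tendsto_max[OF assms[unfolded conv_abs_def]] by simp
  have "av (s n - t n - (l - l')) \<le> max (av (s n - l)) (av (t n - l'))" for n
    using av_diff_le[of "s n - l" "t n - l'"] by (simp add: algebra_simps)
  then show "\<forall>n. norm (av (s n - t n - (l - l'))) \<le> max (av (s n - l)) (av (t n - l'))"
    by simp
qed

lemma conv_abs_series_tail_le:
  assumes "conv_abs av (\<lambda>M. \<Sum>n<M. g n) l" and "\<And>n. N \<le> n \<Longrightarrow> av (g n) \<le> B" and "B \<ge> 0"
  shows "av (l - (\<Sum>n<N. g n)) \<le> B"
  by (rule conv_abs_limit_le[OF assms(1), where N = N]) (use assms(2,3) in \<open>auto intro: av_sum_diff_le\<close>)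

lemma conv_abs_series_terms_tendsto_0:
  assumes "conv_abs av (\<lambda>N. \<Sum>n<N. f n) l"
  shows "(\<lambda>n. av (f n)) \<longlonglongrightarrow> 0"
proof (rule Lim_null_comparison[OF always_eventually])
  let ?s = "\<lambda>N. \<Sum>n<N. f n"
  have lim: "(\<lambda>n. av (?s n - l)) \<longlonglongrightarrow> 0"
    using assms unfolding conv_abs_def .
  show "(\<lambda>n. max (av (?s (Suc n) - l)) (av (?s n - l))) \<longlonglongrightarrow> 0"
    using tendsto_max[OF LIMSEQ_Suc[OF lim] lim] by simp
  have "av (f n) \<le> max (av (?s (Suc n) - l)) (av (?s n - l))" for n
    using av_diff_triangle[of "?s (Suc n)" "?s n" l] av_diff_commute[of l "?s n"] by simp
  then show "\<forall>n. norm (av (f n)) \<le> max (av (?s (Suc n) - l)) (av (?s n - l))"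
    by simp
qed

lemma entire_repr_diff:
  assumes "entire_repr av d G" "entire_repr av e H"
  shows "entire_repr av (\<lambda>n. d n - e n) (\<lambda>z. G z - H z)"
  unfolding entire_repr_def
proof
  fix z
  have "conv_abs av (\<lambda>N. (\<Sum>n<N. d n * z ^ n) - (\<Sum>n<N. e n * z ^ n)) (G z - H z)"
    using assms unfolding entire_repr_def by (intro conv_abs_diff) auto
  then show "conv_abs av (\<lambda>N. \<Sum>n<N. (d n - e n) * z ^ n) (G z - H z)"
    by (simp add: sum_subtractf left_diff_distrib)
qed

lemma entire_repr_scale:
  assumes "entire_repr av e G"
  shows "entire_repr av (\<lambda>n. e n * a ^ n) (\<lambda>z. G (a * z))"
  unfolding entire_repr_def
proof
  fix z
  have "conv_abs av (\<lambda>N. \<Sum>n<N. e n * (a * z) ^ n) (G (a * z))"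
    using assms unfolding entire_repr_def by blast
  then show "conv_abs av (\<lambda>N. \<Sum>n<N. e n * a ^ n * z ^ n) (G (a * z))"
    by (simp add: power_mult_distrib mult.assoc)
qed

lemma affine_radius:
  assumes "a \<noteq> 0" "av b / av a < r"
  shows "av b < av a * r" and "0 < r"
proof -
  have "0 < av a"
    using assms(1) by simp
  with assms(2) show "av b < av a * r"
    by (simp add: pos_divide_less_eq mult.commute)
  with \<open>0 < av a\<close> show "0 < r"
    by (meson av_nonneg le_less_trans zero_less_mult_pos)
qed

lemma mu_least:
  assumes "\<And>n. av (c n) * r ^ n \<le> B"
  shows "mu av r c \<le> B"
  unfolding mu_def by (rule cSUP_least) (use assms in auto)

lemma av_shift_term_le:
  assumes "av b \<le> \<rho>" "0 \<le> w" "w \<le> \<rho>"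
  shows "av (shift_term e b k n) * w ^ k \<le> av (e n) * \<rho> ^ n"
proof (cases "k \<le> n")
  case False
  then show ?thesis
    using assms(1) order_trans[OF av_nonneg] by (simp add: shift_term_def binomial_eq_0)
next
  case True
  have "av (of_nat (n choose k) :: 'k) * av b ^ (n - k) * w ^ k \<le> 1 * \<rho> ^ (n - k) * \<rho> ^ k"
    using assms av_of_nat_le_1 by (intro mult_mono power_mono) auto
  also have "\<dots> = \<rho> ^ n"
    using True by (simp add: power_add[symmetric])
  finally have "av (e n) * (av (of_nat (n choose k) :: 'k) * av b ^ (n - k) * w ^ k) \<le> av (e n) * \<rho> ^ n"
    by (rule mult_left_mono) simp
  then show ?thesis
    by (simp add: shift_term_def av_mult mult_ac)
qed

end

locale nontrivial_nonarch_field = nonarch_field +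
  assumes nontrivial: "nontrivial_abs av"
begin

lemma exists_av_gt_1: "\<exists>y. av y > 1"
proof -
  obtain x where x: "x \<noteq> 0" "av x \<noteq> 1"
    using nontrivial unfolding nontrivial_abs_def by blast
  then have "av x > 1 \<or> av (inverse x) > 1"
    by (auto simp: one_less_inverse_iff)
  then show ?thesis
    by blast
qed

lemma exists_av_ge: "\<exists>z. r \<le> av z"
proof -
  obtain y where "av y > 1"
    using exists_av_gt_1 by blast
  then obtain n where "r < av y ^ n"
    using real_arch_pow by blast
  then show ?thesis
    by (intro exI[of _ "y ^ n"]) simp
qed

lemma exists_nonzero_av_less:
  assumes "\<epsilon> > 0"
  shows "\<exists>z. z \<noteq> 0 \<and> av z < \<epsilon>"
proof -
  obtain w where w: "2 / \<epsilon> \<le> av w"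
    using exists_av_ge by blast
  moreover have "0 < 2 / \<epsilon>"
    using assms by simp
  ultimately have "0 < av w"
    by linarith
  with w assms have "w \<noteq> 0" and "inverse (av w) < \<epsilon>"
    by (auto simp: field_simps)
  then show ?thesis
    by (intro exI[of _ "inverse w"]) simp
qed

lemma entire_repr_terms_tendsto_0:
  assumes "entire_repr av c F" "r \<ge> 0"
  shows "(\<lambda>n. av (c n) * r ^ n) \<longlonglongrightarrow> 0"
proof -
  obtain z where z: "r \<le> av z"
    using exists_av_ge by blast
  have "\<forall>n. norm (av (c n) * r ^ n) \<le> av (c n * z ^ n)"
    using z assms(2) by (auto simp: av_mult intro: mult_left_mono power_mono)
  moreover have "(\<lambda>n. av (c n * z ^ n)) \<longlonglongrightarrow> 0"
    using conv_abs_series_terms_tendsto_0 assms(1) unfolding entire_repr_def by blast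
  ultimately show ?thesis
    by (rule Lim_null_comparison[OF always_eventually])
qed

lemma mu_upper:
  assumes "entire_repr av c F" "r \<ge> 0"
  shows "av (c n) * r ^ n \<le> mu av r c"
proof -
  have "bounded (range (\<lambda>n. av (c n) * r ^ n))"
    using entire_repr_terms_tendsto_0[OF assms] by (intro convergent_imp_bounded) (auto simp: convergent_def)
  then show ?thesis
    unfolding mu_def by (intro cSUP_upper bounded_imp_bdd_above) auto
qed

lemma mu_nonneg:
  assumes "entire_repr av c F" "r \<ge> 0"
  shows "0 \<le> mu av r c"
proof -
  have "av (c 0) \<le> mu av r c"
    using mu_upper[OF assms, of 0] by simp
  then show ?thesis
    using av_nonneg[of "c 0"] by linarith
qed

lemma mu_mono:
  assumes "entire_repr av c F" "0 \<le> r" "r \<le> r'"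
  shows "mu av r c \<le> mu av r' c"
proof (rule mu_least)
  fix n
  have "av (c n) * r ^ n \<le> av (c n) * r' ^ n"
    using assms(2,3) by (intro mult_left_mono power_mono) auto
  also have "\<dots> \<le> mu av r' c"
    using mu_upper[OF assms(1)] assms(2,3) by simp
  finally show "av (c n) * r ^ n \<le> mu av r' c" .
qed

lemma mu_pos:
  assumes "entire_repr av c F" "F z \<noteq> 0" "r > 0"
  shows "mu av r c > 0"
proof -
  have "\<exists>k. c k \<noteq> 0"
  proof (rule ccontr)
    assume "\<nexists>k. c k \<noteq> 0"
    then have "conv_abs av (\<lambda>N. \<Sum>n<N. c n * z ^ n) 0"
      unfolding conv_abs_def by simp
    with assms(1,2) show False
      unfolding entire_repr_def using conv_abs_unique by blast
  qed
  then obtain k where "c k \<noteq> 0"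
    by blast
  then have "0 < av (c k) * r ^ k"
    using assms(3) by simp
  also have "\<dots> \<le> mu av r c"
    using mu_upper[OF assms(1)] assms(3) by simp
  finally show ?thesis .
qed

text \<open>
  Identity theorem: if \<open>e\<^sub>k\<close> is the first nonzero coefficient, then for \<open>z \<noteq> 0\<close> small
  enough the term \<open>e\<^sub>k z\<^sup>k\<close> dominates every partial sum, so the sums stay away from 0.
\<close>
lemma entire_repr_zero_coeffs:
  assumes "entire_repr av e (\<lambda>z. 0)"
  shows "e n = 0"
proof (rule ccontr)
  assume "e n \<noteq> 0"
  define k where "k = (LEAST k. e k \<noteq> 0)"
  have ek: "e k \<noteq> 0"
    unfolding k_def by (rule LeastI[of _ n]) fact
  have below: "e j = 0" if "j < k" for j
    using not_less_Least[of j "\<lambda>k. e k \<noteq> 0"] that k_def by blast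
  define M where "M = mu av 1 e"
  have M: "M \<ge> 0" "\<And>n. av (e n) \<le> M"
    unfolding M_def using mu_nonneg[OF assms] mu_upper[OF assms, of 1] by auto
  obtain z where z: "z \<noteq> 0" "av z < min 1 (av (e k) / (M + 1))"
    using exists_nonzero_av_less[of "min 1 (av (e k) / (M + 1))"] ek M(1) by auto
  define \<rho> where "\<rho> = av z"
  have \<rho>: "0 < \<rho>" "\<rho> < 1"
    using z unfolding \<rho>_def by auto
  have "\<rho> * (M + 1) < av (e k)"
    using z M(1) unfolding \<rho>_def by (simp add: pos_less_divide_eq add_nonneg_pos)
  then have "M * \<rho> < av (e k)"
    using \<rho>(1) by (simp add: algebra_simps)
  then have "M * \<rho> * \<rho> ^ k < av (e k) * \<rho> ^ k"
    using \<rho>(1) by (intro mult_strict_right_mono) auto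
  let ?B = "M * \<rho> ^ Suc k"
  from \<open>M * \<rho> * \<rho> ^ k < av (e k) * \<rho> ^ k\<close> have dominant: "?B < av (e k * z ^ k)"
    by (simp add: \<rho>_def av_mult mult_ac)
  have small: "av (e i * z ^ i) \<le> ?B" if "i \<noteq> k" for i
  proof (cases "i < k")
    case False
    with that have "\<rho> ^ i \<le> \<rho> ^ Suc k"
      using \<rho> by (intro power_decreasing) auto
    then show ?thesis
      using M \<rho> by (auto simp: \<rho>_def av_mult intro: mult_mono)
  qed (use below M(1) \<rho>(1) in simp)
  have "av (\<Sum>i<N. e i * z ^ i) = av (e k * z ^ k)" if "Suc k \<le> N" for N
    by (rule av_sum_eq_dominant[where B = ?B]) (use that small dominant M(1) \<rho>(1) in auto)
  then have "\<exists>N. \<forall>N'\<ge>N. av (e k * z ^ k) \<le> av (\<Sum>i<N'. e i * z ^ i)"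
    by (intro exI[of _ "Suc k"]) simp
  moreover have "(\<lambda>N. av (\<Sum>i<N. e i * z ^ i)) \<longlonglongrightarrow> 0"
    using assms unfolding entire_repr_def conv_abs_def by simp
  ultimately have "av (e k * z ^ k) \<le> 0"
    using LIMSEQ_le_const by blast
  moreover have "0 < av (e k * z ^ k)"
    using ek z(1) by simp
  ultimately show False
    by linarith
qed

lemma entire_repr_unique:
  assumes "entire_repr av d H" "entire_repr av d' H"
  shows "d = d'"
proof
  fix n
  have "entire_repr av (\<lambda>n. d n - d' n) (\<lambda>z. 0)"
    using entire_repr_diff[OF assms] by simp
  then show "d n = d' n"
    using entire_repr_zero_coeffs by fastforce
qed

end

locale complete_nonarch_field = nontrivial_nonarch_field +
  assumes complete: "complete_abs av"
begin

lemma conv_abs_series_if_terms_tendsto_0: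
  assumes "(\<lambda>n. av (f n)) \<longlonglongrightarrow> 0"
  shows "\<exists>l. conv_abs av (\<lambda>N. \<Sum>n<N. f n) l"
proof -
  let ?s = "\<lambda>N. \<Sum>n<N. f n"
  have "\<exists>N. \<forall>m\<ge>N. \<forall>n\<ge>N. av (?s m - ?s n) < \<epsilon>" if "\<epsilon> > 0" for \<epsilon>
  proof -
    obtain N where N: "\<And>n. N \<le> n \<Longrightarrow> av (f n) \<le> \<epsilon> / 2"
      using LIMSEQ_0_eventually_le[OF assms] \<open>\<epsilon> > 0\<close> half_gt_zero by blast
    have ordered: "av (?s m - ?s n) \<le> \<epsilon> / 2" if "N \<le> n" "n \<le> m" for m n
      using that N \<open>\<epsilon> > 0\<close> by (intro av_sum_diff_le) auto
    show ?thesis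
    proof (intro exI allI impI)
      fix m n
      assume "N \<le> m" "N \<le> n"
      then have "av (?s m - ?s n) \<le> \<epsilon> / 2"
        using ordered[of n m] ordered[of m n] av_diff_commute[of "?s m" "?s n"] by (cases "n \<le> m") auto
      with \<open>\<epsilon> > 0\<close> show "av (?s m - ?s n) < \<epsilon>"
        by linarith
    qed
  qed
  then have "\<forall>\<epsilon>>0. \<exists>N. \<forall>m\<ge>N. \<forall>n\<ge>N. av (?s m - ?s n) < \<epsilon>"
    by blast
  then show ?thesis
    using complete unfolding complete_abs_def by (elim allE[of _ ?s]) blast
qed

definition shift_coeff where
  "shift_coeff e b k = (SOME l. conv_abs av (\<lambda>N. \<Sum>n<N. shift_term e b k n) l)"

lemma conv_abs_shift_coeff:
  assumes "entire_repr av e G"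
  shows "conv_abs av (\<lambda>N. \<Sum>n<N. shift_term e b k n) (shift_coeff e b k)"
  unfolding shift_coeff_def
proof (rule someI_ex, rule conv_abs_series_if_terms_tendsto_0)
  let ?R = "max (av b) 1"
  show "(\<lambda>n. av (shift_term e b k n)) \<longlonglongrightarrow> 0"
  proof (rule Lim_null_comparison[OF always_eventually])
    show "(\<lambda>n. av (e n) * ?R ^ n) \<longlonglongrightarrow> 0"
      by (rule entire_repr_terms_tendsto_0[OF assms]) simp
    show "\<forall>n. norm (av (shift_term e b k n)) \<le> av (e n) * ?R ^ n"
      using av_shift_term_le[of b ?R 1] by simp
  qed
qed

lemma shift_coeff_le_mu:
  assumes "entire_repr av e G" "av b < \<rho>"
  shows "av (shift_coeff e b k) * \<rho> ^ k \<le> mu av \<rho> e"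
proof -
  have \<rho>: "\<rho> > 0"
    using assms(2) av_nonneg[of b] by linarith
  have "av (shift_term e b k n) \<le> mu av \<rho> e / \<rho> ^ k" for n
  proof -
    have "av (shift_term e b k n) * \<rho> ^ k \<le> av (e n) * \<rho> ^ n"
      using av_shift_term_le[of b \<rho> \<rho>] assms(2) \<rho> by simp
    also have "\<dots> \<le> mu av \<rho> e"
      using mu_upper[OF assms(1)] \<rho> by simp
    finally show ?thesis
      using \<rho> by (simp add: pos_le_divide_eq)
  qed
  then have "av (shift_coeff e b k - 0) \<le> mu av \<rho> e / \<rho> ^ k"
    using mu_nonneg[OF assms(1)] \<rho>
    by (intro conv_abs_limit_le[OF conv_abs_shift_coeff[OF assms(1)], where N = 0]) (auto intro: av_sum_le)
  with \<rho> show ?thesis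
    by (simp add: pos_le_divide_eq)
qed

text \<open>
  Rearranging the double series: the first \<open>N\<close> rows \<open>e\<^sub>n (z + b)\<^sup>n\<close> are finite sums over
  \<open>k\<close>, and each column tail beyond \<open>N\<close> is bounded by the row bound \<open>\<eta>\<close>.
\<close>
lemma shift_coeff_partial_sum_near:
  assumes E: "entire_repr av e G"
    and tail: "\<And>n. N \<le> n \<Longrightarrow> av (e n) * \<rho> ^ n \<le> \<eta>"
    and bz: "av b \<le> \<rho>" "av z \<le> \<rho>" and "\<eta> \<ge> 0" "N \<le> K"
  shows "av ((\<Sum>k<K. shift_coeff e b k * z ^ k) - (\<Sum>n<N. e n * (z + b) ^ n)) \<le> \<eta>"
proof -
  define t where "t n k = shift_term e b k n * z ^ k" for n k
  have "(\<Sum>n<N. e n * (z + b) ^ n) = (\<Sum>n<N. \<Sum>k<K. t n k)"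
    using \<open>N \<le> K\<close> by (intro sum.cong) (auto simp: t_def sum_shift_term_binomial)
  then have "(\<Sum>k<K. shift_coeff e b k * z ^ k) - (\<Sum>n<N. e n * (z + b) ^ n)
      = (\<Sum>k<K. shift_coeff e b k * z ^ k - (\<Sum>n<N. t n k))"
    by (simp add: sum.swap[of _ "{..<N}"] sum_subtractf)
  also have "av \<dots> \<le> \<eta>"
  proof (intro av_sum_le \<open>\<eta> \<ge> 0\<close>)
    fix k
    have "conv_abs av (\<lambda>M. \<Sum>n<M. t n k) (shift_coeff e b k * z ^ k)"
      using conv_abs_mult_right[OF conv_abs_shift_coeff[OF E]]
      unfolding t_def by (simp add: sum_distrib_right)
    moreover have "av (t n k) \<le> \<eta>" if "N \<le> n" for n
      using av_shift_term_le[OF bz(1) av_nonneg bz(2), of e k n] tail[OF that]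
      unfolding t_def av_mult av_power by linarith
    ultimately show "av (shift_coeff e b k * z ^ k - (\<Sum>n<N. t n k)) \<le> \<eta>"
      using \<open>\<eta> \<ge> 0\<close> by (rule conv_abs_series_tail_le)
  qed
  finally show ?thesis .
qed

lemma entire_repr_shift:
  assumes E: "entire_repr av e G"
  shows "entire_repr av (shift_coeff e b) (\<lambda>z. G (z + b))"
  unfolding entire_repr_def conv_abs_def
proof (intro allI LIMSEQ_I)
  fix z and \<epsilon> :: real
  assume "0 < \<epsilon>"
  define \<rho> where "\<rho> = max (av b) (av z)"
  have "(\<lambda>n. av (e n) * \<rho> ^ n) \<longlonglongrightarrow> 0"
    by (rule entire_repr_terms_tendsto_0[OF E]) (simp add: \<rho>_def le_max_iff_disj)
  then obtain N where N: "\<And>n. N \<le> n \<Longrightarrow> av (e n) * \<rho> ^ n \<le> \<epsilon> / 2"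
    using LIMSEQ_0_eventually_le \<open>0 < \<epsilon>\<close> half_gt_zero by blast
  let ?P = "\<Sum>n<N. e n * (z + b) ^ n"
  have tail: "av (G (z + b) - ?P) \<le> \<epsilon> / 2"
  proof (rule conv_abs_series_tail_le)
    show "conv_abs av (\<lambda>M. \<Sum>n<M. e n * (z + b) ^ n) (G (z + b))"
      using E unfolding entire_repr_def by blast
    have "av (z + b) \<le> \<rho>"
      using av_add_le[of z b] unfolding \<rho>_def by auto
    then have "av (e n) * av (z + b) ^ n \<le> av (e n) * \<rho> ^ n" for n
      by (intro mult_left_mono power_mono) auto
    then show "av (e n * (z + b) ^ n) \<le> \<epsilon> / 2" if "N \<le> n" for n
      using N[OF that] unfolding av_mult av_power by (meson order_trans)
  qed (use \<open>0 < \<epsilon>\<close> in simp)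
  show "\<exists>N. \<forall>K\<ge>N. norm (av ((\<Sum>k<K. shift_coeff e b k * z ^ k) - G (z + b)) - 0) < \<epsilon>"
  proof (intro exI allI impI)
    fix K
    assume "N \<le> K"
    let ?S = "\<Sum>k<K. shift_coeff e b k * z ^ k"
    have "av (?S - ?P) \<le> \<epsilon> / 2"
      using \<open>0 < \<epsilon>\<close> \<open>N \<le> K\<close> by (intro shift_coeff_partial_sum_near[OF E N]) (auto simp: \<rho>_def)
    have "av (?S - G (z + b)) \<le> max (av (?S - ?P)) (av (?P - G (z + b)))"
      by (rule av_diff_triangle)
    also have "\<dots> \<le> \<epsilon> / 2"
      using \<open>av (?S - ?P) \<le> \<epsilon> / 2\<close> tail av_diff_commute[of "G (z + b)" ?P] by simp
    finally have "av (?S - G (z + b)) \<le> \<epsilon> / 2" .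
    with \<open>0 < \<epsilon>\<close> show "norm (av (?S - G (z + b)) - 0) < \<epsilon>"
      by simp
  qed
qed

lemma entire_repr_affine:
  assumes E: "entire_repr av e G" and a: "a \<noteq> 0" "av a \<le> 1" and r: "av b / av a < r"
  shows "\<exists>d. entire_repr av d (\<lambda>z. G (a * z + b)) \<and> mu av r d \<le> mu av r e"
proof (intro exI conjI)
  have "av b < av a * r" and "r \<ge> 0"
    using affine_radius[OF a(1) r] by auto
  show "entire_repr av (\<lambda>n. shift_coeff e b n * a ^ n) (\<lambda>z. G (a * z + b))"
    using entire_repr_scale[OF entire_repr_shift[OF E]] by simp
  show "mu av r (\<lambda>n. shift_coeff e b n * a ^ n) \<le> mu av r e"
  proof (rule mu_least)
    fix n
    have "av (shift_coeff e b n * a ^ n) * r ^ n = av (shift_coeff e b n) * (av a * r) ^ n"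
      by (simp add: av_mult power_mult_distrib)
    also have "\<dots> \<le> mu av (av a * r) e"
      using shift_coeff_le_mu[OF E \<open>av b < av a * r\<close>] .
    also have "\<dots> \<le> mu av r e"
      using \<open>r \<ge> 0\<close> a by (intro mu_mono[OF E]) (auto intro: mult_left_le_one_le)
    finally show "av (shift_coeff e b n * a ^ n) * r ^ n \<le> mu av r e" .
  qed
qed

lemma entire_repr_diffL_power:
  assumes E: "entire_repr av c F" and a: "a \<noteq> 0" "av a \<le> 1" and r: "av b / av a < r"
  shows "\<exists>d. entire_repr av d ((diffL (\<lambda>z. a * z + b) ^^ m) F) \<and> mu av r d \<le> mu av r c"
proof (induct m)
  case 0
  show ?case
    using E by auto
next
  case (Suc m)
  define H where "H = (diffL (\<lambda>z. a * z + b) ^^ m) F"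
  obtain d where d: "entire_repr av d H" "mu av r d \<le> mu av r c"
    using Suc unfolding H_def by blast
  obtain d' where d': "entire_repr av d' (\<lambda>z. H (a * z + b))" "mu av r d' \<le> mu av r d"
    using entire_repr_affine[OF d(1) a r] by blast
  have "r \<ge> 0"
    using affine_radius[OF a(1) r] by simp
  have "mu av r (\<lambda>n. d' n - d n) \<le> mu av r c"
  proof (rule mu_least)
    fix n
    have "av (d' n - d n) * r ^ n \<le> max (av (d' n)) (av (d n)) * r ^ n"
      using \<open>r \<ge> 0\<close> by (intro mult_right_mono av_diff_le) simp
    also have "\<dots> \<le> mu av r c"
      using mu_upper[OF d'(1) \<open>r \<ge> 0\<close>, of n] mu_upper[OF d(1) \<open>r \<ge> 0\<close>, of n] d(2) d'(2)
      by (simp add: max_def)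
    finally show "av (d' n - d n) * r ^ n \<le> mu av r c" .
  qed
  moreover have "(diffL (\<lambda>z. a * z + b) ^^ Suc m) F = (\<lambda>z. H (a * z + b) - H z)"
    unfolding H_def by (simp add: diffL_def)
  ultimately show ?case
    using entire_repr_diff[OF d'(1) d(1)] by auto
qed

end

theorem lemma2p1:
  fixes av :: "'k::field_char_0 \<Rightarrow> real"
    and a b :: 'k and c :: "nat \<Rightarrow> 'k" and F :: "'k \<Rightarrow> 'k" and m :: nat and r :: real
  assumes "nonarch_abs av" and "nontrivial_abs av" and "complete_abs av"
    and "alg_closed_field TYPE('k)"
    and "a \<noteq> 0" and "av a \<le> 1"
    and "entire_repr av c F" and "\<exists>z. F z \<noteq> 0"
    and "m > 0"
    and "r > av b / av a"
  shows "(\<exists>d. entire_repr av d (\<lambda>z. F (a * z + b)))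
       \<and> (\<forall>d. entire_repr av d (\<lambda>z. F (a * z + b)) \<longrightarrow>
              mu av r d \<le> mu av r c \<and> mu av r d / mu av r c \<le> 1)
       \<and> (\<exists>d. entire_repr av d ((diffL (\<lambda>z. a * z + b) ^^ m) F))
       \<and> (\<forall>d. entire_repr av d ((diffL (\<lambda>z. a * z + b) ^^ m) F) \<longrightarrow>
              mu av r d / mu av r c \<le> 1)"
proof -
  interpret complete_nonarch_field av
    using assms(1-3) by unfold_locales auto
  note a = assms(5,6) and E = assms(7) and r = assms(10)
  have "r > 0"
    using affine_radius[OF a(1) r] by simp
  then have mu_c: "mu av r c > 0"
    using mu_pos[OF E] assms(8) by blast
  obtain d0 where d0: "entire_repr av d0 (\<lambda>z. F (a * z + b))" "mu av r d0 \<le> mu av r c"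
    using entire_repr_affine[OF E a r] by blast
  obtain dm where dm: "entire_repr av dm ((diffL (\<lambda>z. a * z + b) ^^ m) F)" "mu av r dm \<le> mu av r c"
    using entire_repr_diffL_power[OF E a r] by blast
  have "mu av r d \<le> mu av r c" if "entire_repr av d (\<lambda>z. F (a * z + b))" for d
    using entire_repr_unique[OF that d0(1)] d0(2) by simp
  moreover have "mu av r d \<le> mu av r c" if "entire_repr av d ((diffL (\<lambda>z. a * z + b) ^^ m) F)" for d
    using entire_repr_unique[OF that dm(1)] dm(2) by simp
  ultimately show ?thesis
    using d0(1) dm(1) mu_c by simp blast
qed

end
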